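(* Let ${\bf m}=(m_1,\dots,m_n)$ and ${\bf a}=(a_1,\dots,a_n)$ be vectors of nonnegative integers with $\|{\bf a}\|<\|{\bf m}\|$ for which at least one $({\bf m},{\bf a})$-permutation exists. For $i\in[n]$, let $f_i({\bf m},{\bf a})$ be the fraction of all $({\bf m},{\bf a})$-permutations whose last term is $i$. Then \[f_i({\bf m},{\bf a})\le\frac{m_i}{\|{\bf m}\|-a_i}.\]
   Context: $\|v\|=\sum_i |v_i|$. An ${\bf m}$-permutation is a word of length $\|{\bf m}\|$ over the alphabet $[n]$ in which each $i$ appears exactly $m_i$ times. An $({\bf m},{\bf a})$-permutation is an ${\bf m}$-permutation $\pi$ such that the first $a_1$ terms are not $1$, the next $a_2$ terms are not $2$, and so on (so positions $a_1+\dots+a_{i-1}+1,\dots,a_1+\dots+a_i$ are forbidden from taking the value $i$). *)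

theory Defs
  imports Complex_Main "HOL-Library.Multiset"
begin

text \<open>Vectors m = (m_1..m_n), a = (a_1..a_n) are functions nat => nat; only indices 1..n matter.
  Words are lists; positions of a list are 0-indexed, so the paper's positions
  a_1+..+a_(i-1)+1 .. a_1+..+a_i correspond to list indices in
  [a_1+..+a_(i-1), a_1+..+a_i).\<close>

definition norm1 :: "nat \<Rightarrow> (nat \<Rightarrow> nat) \<Rightarrow> nat" where
  "norm1 n v = (\<Sum>i=1..n. v i)"

definition m_perm :: "nat \<Rightarrow> (nat \<Rightarrow> nat) \<Rightarrow> nat list \<Rightarrow> bool" where
  "m_perm n m w \<longleftrightarrow> length w = norm1 n m \<and> set w \<subseteq> {1..n}
     \<and> (\<forall>i\<in>{1..n}. count (mset w) i = m i)"

definition ma_perm :: "nat \<Rightarrow> (nat \<Rightarrow> nat) \<Rightarrow> (nat \<Rightarrow> nat) \<Rightarrow> nat list \<Rightarrow> bool" where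
  "ma_perm n m a w \<longleftrightarrow> m_perm n m w \<and>
     (\<forall>i\<in>{1..n}. \<forall>p. (\<Sum>j=1..<i. a j) \<le> p \<and> p < (\<Sum>j=1..i. a j) \<and> p < length w
        \<longrightarrow> w ! p \<noteq> i)"

definition ma_perms :: "nat \<Rightarrow> (nat \<Rightarrow> nat) \<Rightarrow> (nat \<Rightarrow> nat) \<Rightarrow> nat list set" where
  "ma_perms n m a = {w. ma_perm n m a w}"

definition frac_last :: "nat \<Rightarrow> (nat \<Rightarrow> nat) \<Rightarrow> (nat \<Rightarrow> nat) \<Rightarrow> nat \<Rightarrow> real" where
  "frac_last n m a i = real (card {w \<in> ma_perms n m a. last w = i}) / real (card (ma_perms n m a))"

end

theory Submission
  imports Defs
begin

text \<open>Double counting. Let S be the \<parallel>m\<parallel> - a_i positions outside the block where i is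
  forbidden. Every (m,a)-permutation has all m_i of its entries i in S, so there are m_i times
  as many pairs (q, w) with q \<in> S and w ! q = i as there are permutations. For each q \<in> S,
  swapping position q with the last position maps the permutations ending in i injectively to
  those with i at q; the swap is legal because \<parallel>a\<parallel> < \<parallel>m\<parallel> puts the last position beyond every
  forbidden block. Hence (\<parallel>m\<parallel> - a_i) times the number of permutations ending in i is at most
  m_i times the number of all permutations.\<close>

definition forbidden_block :: "(nat \<Rightarrow> nat) \<Rightarrow> nat \<Rightarrow> nat set" where
  "forbidden_block a i = {(\<Sum>j=1..<i. a j)..<(\<Sum>j=1..i. a j)}"

definition swap_positions :: "nat \<Rightarrow> nat \<Rightarrow> 'a list \<Rightarrow> 'a list" where
  "swap_positions q r w = w[q := w ! r, r := w ! q]"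

lemma length_swap_positions [simp]: "length (swap_positions q r w) = length w"
  by (simp add: swap_positions_def)

lemma nth_swap_positions:
  "q < length w \<Longrightarrow> r < length w \<Longrightarrow> p < length w \<Longrightarrow>
   swap_positions q r w ! p = (if p = r then w ! q else if p = q then w ! r else w ! p)"
  by (auto simp: swap_positions_def nth_list_update)

lemma swap_positions_swap_positions:
  "q < length w \<Longrightarrow> r < length w \<Longrightarrow> swap_positions q r (swap_positions q r w) = w"
  by (rule nth_equalityI) (auto simp: nth_swap_positions)

lemma mset_swap_positions:
  "q < length w \<Longrightarrow> r < length w \<Longrightarrow> mset (swap_positions q r w) = mset w"
  by (simp add: swap_positions_def mset_swap)

lemma card_forbidden_block: "1 \<le> i \<Longrightarrow> card (forbidden_block a i) = a i"
  by (cases i) (simp_all add: forbidden_block_def atLeastLessThanSuc_atLeastAtMost)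

lemma forbidden_block_subset:
  assumes "i \<le> n"
  shows "forbidden_block a i \<subseteq> {..<norm1 n a}"
proof -
  have "(\<Sum>j=1..i. a j) \<le> norm1 n a"
    using assms unfolding norm1_def by (intro sum_mono2) auto
  then show ?thesis
    by (auto simp: forbidden_block_def)
qed

lemma ma_perm_iff_forbidden_block:
  "ma_perm n m a w \<longleftrightarrow> m_perm n m w \<and>
     (\<forall>j\<in>{1..n}. \<forall>p\<in>forbidden_block a j. p < length w \<longrightarrow> w ! p \<noteq> j)"
  unfolding ma_perm_def forbidden_block_def Ball_def atLeastLessThan_iff by blast

lemma length_ma_perm: "ma_perm n m a w \<Longrightarrow> length w = norm1 n m"
  by (simp add: ma_perm_def m_perm_def)

lemma finite_ma_perms: "finite (ma_perms n m a)"
proof (rule finite_subset)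
  show "ma_perms n m a \<subseteq> {w. set w \<subseteq> {1..n} \<and> length w = norm1 n m}"
    by (auto simp: ma_perms_def ma_perm_def m_perm_def)
qed (simp add: finite_lists_length_eq)

lemma ma_perm_swap_positions:
  assumes w: "ma_perm n m a w" and "q < length w" "r < length w"
    and "q \<notin> forbidden_block a (w ! r)" "r \<notin> forbidden_block a (w ! q)"
  shows "ma_perm n m a (swap_positions q r w)"
proof -
  have "m_perm n m (swap_positions q r w)"
    using w assms(2,3) mset_swap_positions[of q w r]
    by (simp add: ma_perm_def m_perm_def flip: set_mset_mset)
  moreover have "swap_positions q r w ! p \<noteq> j"
    if "j \<in> {1..n}" "p \<in> forbidden_block a j" "p < length w" for j p
    using w that assms(2-5) by (auto simp: ma_perm_iff_forbidden_block nth_swap_positions)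
  ultimately show ?thesis
    by (simp add: ma_perm_iff_forbidden_block)
qed

lemma card_last_le_card_nth:
  assumes "norm1 n a < norm1 n m" "q < norm1 n m" "q \<notin> forbidden_block a i"
  shows "card {w \<in> ma_perms n m a. last w = i} \<le> card {w \<in> ma_perms n m a. w ! q = i}"
proof -
  define r where "r = norm1 n m - 1"
  have r: "r < norm1 n m" "norm1 n a \<le> r"
    using assms(1) by (simp_all add: r_def)
  have last_eq: "last w = w ! r" if "ma_perm n m a w" for w
    using that r(1) by (metis last_conv_nth length_0_conv length_ma_perm not_less0 r_def)
  have "swap_positions q r ` {w \<in> ma_perms n m a. last w = i}
          \<subseteq> {w \<in> ma_perms n m a. w ! q = i}"
  proof (rule image_subsetI)
    fix w assume "w \<in> {w \<in> ma_perms n m a. last w = i}"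
    then have w: "w \<in> ma_perms n m a" "last w = i" by simp_all
    have len: "length w = norm1 n m" and wr: "w ! r = i"
      using w by (auto simp: ma_perms_def length_ma_perm last_eq)
    have "w ! q \<in> set w"
      using assms(2) len by simp
    then have "w ! q \<in> {1..n}"
      using w(1) by (auto simp: ma_perms_def ma_perm_def m_perm_def)
    then have "r \<notin> forbidden_block a (w ! q)"
      using forbidden_block_subset[of "w ! q" n a] r(2) by auto
    then have "ma_perm n m a (swap_positions q r w)"
      using w(1) assms(2,3) r(1) len wr by (intro ma_perm_swap_positions) (simp_all add: ma_perms_def)
    moreover have "swap_positions q r w ! q = i"
      using assms(2) r(1) len wr by (simp add: nth_swap_positions)
    ultimately show "swap_positions q r w \<in> {w \<in> ma_perms n m a. w ! q = i}"
      by (simp add: ma_perms_def)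
  qed
  moreover have "inj_on (swap_positions q r) {w \<in> ma_perms n m a. last w = i}"
    by (rule inj_on_inverseI[where g = "swap_positions q r"])
       (use assms(2) r(1) in \<open>auto simp: ma_perms_def length_ma_perm swap_positions_swap_positions\<close>)
  ultimately show ?thesis
    by (intro card_inj_on_le) (simp_all add: finite_ma_perms)
qed

lemma card_occurrences_outside_forbidden_block:
  assumes "ma_perm n m a w" "i \<in> {1..n}"
  shows "card {q \<in> {..<norm1 n m} - forbidden_block a i. w ! q = i} = m i"
proof -
  have "q \<notin> forbidden_block a i" if "q < length w" "w ! q = i" for q
    using assms that by (auto simp: ma_perm_iff_forbidden_block)
  then have "{q \<in> {..<norm1 n m} - forbidden_block a i. w ! q = i} = {q. q < length w \<and> w ! q = i}"
    using assms(1) by (auto simp: length_ma_perm)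
  also have "card \<dots> = count (mset w) i"
    by (simp add: count_mset count_list_eq_length_filter length_filter_conv_card eq_commute)
  also have "\<dots> = m i"
    using assms by (simp add: ma_perm_def m_perm_def)
  finally show ?thesis .
qed

lemma card_last_mult_le:
  assumes "norm1 n a < norm1 n m" "i \<in> {1..n}"
  shows "card {w \<in> ma_perms n m a. last w = i} * (norm1 n m - a i) \<le> m i * card (ma_perms n m a)"
proof -
  define S where "S = {..<norm1 n m} - forbidden_block a i"
  have "forbidden_block a i \<subseteq> {..<norm1 n m}"
    using assms forbidden_block_subset[of i n a] by auto
  moreover have "finite (forbidden_block a i)"
    by (simp add: forbidden_block_def)
  ultimately have "card S = norm1 n m - a i"
    using assms(2) by (simp add: S_def card_Diff_subset card_forbidden_block)
  then have "card {w \<in> ma_perms n m a. last w = i} * (norm1 n m - a i)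
               = (\<Sum>q\<in>S. card {w \<in> ma_perms n m a. last w = i})"
    by simp
  also have "\<dots> \<le> (\<Sum>q\<in>S. card {w \<in> ma_perms n m a. w ! q = i})"
    using assms(1) by (intro sum_mono card_last_le_card_nth) (auto simp: S_def)
  also have "\<dots> = m i * card (ma_perms n m a)"
    using assms(2) finite_ma_perms card_occurrences_outside_forbidden_block[of n m a _ i]
    by (intro sum_multicount) (auto simp: S_def ma_perms_def)
  finally show ?thesis .
qed

theorem lemma3p5:
  fixes n :: nat and m a :: "nat \<Rightarrow> nat" and i :: nat
  assumes "norm1 n a < norm1 n m"
    and "ma_perms n m a \<noteq> {}"
    and "i \<in> {1..n}"
  shows "frac_last n m a i \<le> real (m i) / (real (norm1 n m) - real (a i))"
proof -
  have "a i \<le> norm1 n a"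
    using assms(3) unfolding norm1_def by (intro member_le_sum) auto
  then have ai: "a i < norm1 n m"
    using assms(1) by linarith
  have "card (ma_perms n m a) > 0"
    using assms(2) finite_ma_perms by (simp add: card_gt_0_iff)
  moreover have "real (card {w \<in> ma_perms n m a. last w = i}) * real (norm1 n m - a i)
                   \<le> real (m i) * real (card (ma_perms n m a))"
    using card_last_mult_le[OF assms(1,3)] by (metis of_nat_le_iff of_nat_mult)
  ultimately show ?thesis
    using ai by (simp add: frac_last_def divide_simps of_nat_diff)
qed

end
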